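(* Let $q$ be a prime power, $k,m,n$ positive integers, and let $U$ be an $[n,k]_{q^m/q}$ system. Then $U$ is $(k-2,\,n-m-1)_q$-evasive if and only if $U$ is cutting.
   Context: An $[n,k]_{q^m/q}$ system is an $\mathbb F_q$-subspace $U$ of $\mathbb F_{q^m}^k$ with $\dim_{\mathbb F_q}(U)=n$ and $\langle U\rangle_{\mathbb F_{q^m}}=\mathbb F_{q^m}^k$. $U$ is $(h,r)_q$-evasive if $\dim_{\mathbb F_q}(U\cap H)\le r$ for every $\mathbb F_{q^m}$-subspace $H$ of $\mathbb F_{q^m}^k$ with $\dim_{\mathbb F_{q^m}}(H)=h$. $U$ is called cutting (a linear cutting blocking set) if for every $\mathbb F_{q^m}$-hyperplane $H$ of $\mathbb F_{q^m}^k$ one has $\langle H\cap U\rangle_{\mathbb F_{q^m}}=H$. *)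

theory Defs
  imports "HOL-Analysis.Analysis" "HOL-Computational_Algebra.Primes"
begin

text \<open>Linear algebra over a subset K of scalars (K = a subfield F_q, or K = UNIV = F_{q^m})
  in the space 'a^'k, where 'a plays the role of F_{q^m} and CARD('k) = k.\<close>

definition is_subfield :: "'a::field set \<Rightarrow> bool" where
  "is_subfield F \<longleftrightarrow> 0 \<in> F \<and> 1 \<in> F \<and> (\<forall>x\<in>F. \<forall>y\<in>F. x + y \<in> F \<and> x * y \<in> F)
     \<and> (\<forall>x\<in>F. - x \<in> F) \<and> (\<forall>x\<in>F. x \<noteq> 0 \<longrightarrow> inverse x \<in> F)"

definition lin_span :: "'a::field set \<Rightarrow> ('a^'k) set \<Rightarrow> ('a^'k) set" where
  "lin_span K A = {v. \<exists>S c. finite S \<and> S \<subseteq> A \<and> (\<forall>x\<in>S. c x \<in> K) \<and> v = (\<Sum>x\<in>S. c x *s x)}"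

definition lin_indep :: "'a::field set \<Rightarrow> ('a^'k) set \<Rightarrow> bool" where
  "lin_indep K B \<longleftrightarrow> finite B \<and>
     (\<forall>c. (\<forall>x\<in>B. c x \<in> K) \<and> (\<Sum>x\<in>B. c x *s x) = 0 \<longrightarrow> (\<forall>x\<in>B. c x = 0))"

definition lin_subspace :: "'a::field set \<Rightarrow> ('a^'k) set \<Rightarrow> bool" where
  "lin_subspace K U \<longleftrightarrow> 0 \<in> U \<and> (\<forall>x\<in>U. \<forall>y\<in>U. x + y \<in> U) \<and> (\<forall>c\<in>K. \<forall>x\<in>U. c *s x \<in> U)"

definition lin_dim :: "'a::field set \<Rightarrow> ('a^'k) set \<Rightarrow> nat" where
  "lin_dim K U = (SOME n. \<exists>B. B \<subseteq> U \<and> lin_indep K B \<and> lin_span K B = U \<and> card B = n)"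

definition is_system :: "'a::field set \<Rightarrow> nat \<Rightarrow> ('a^'k) set \<Rightarrow> bool" where
  "is_system F n U \<longleftrightarrow> lin_subspace F U \<and> lin_dim F U = n \<and> lin_span UNIV U = UNIV"

definition evasive :: "'a::field set \<Rightarrow> int \<Rightarrow> int \<Rightarrow> ('a^'k) set \<Rightarrow> bool" where
  "evasive F h r U \<longleftrightarrow> (\<forall>H. lin_subspace UNIV H \<and> int (lin_dim UNIV H) = h
      \<longrightarrow> int (lin_dim F (U \<inter> H)) \<le> r)"

definition cutting :: "('a::field^'k) set \<Rightarrow> bool" where
  "cutting U \<longleftrightarrow> (\<forall>H. lin_subspace UNIV H \<and> int (lin_dim UNIV H) = int CARD('k) - 1
      \<longrightarrow> lin_span UNIV (H \<inter> U) = H)"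

end

theory Submission
  imports Defs
begin

text \<open>Over a finite field every subspace has (number of scalars)^(dimension) elements, so all
  dimension conditions become counting conditions.
  If a hyperplane H is not spanned by H \<inter> U, then H \<inter> U lies in a subspace P of codimension 2;
  as U/(U \<inter> H) embeds into the quotient of the whole space by H, which has q^m elements,
  dim(U \<inter> P) \<ge> n - m and U is not evasive.
  Conversely, if U is cutting and P has codimension 2, each of q^m hyperplanes of a pencil through P
  meets U in a subspace strictly larger than U \<inter> P, hence in at least (q - 1)|U \<inter> P| points
  outside P. These point sets are disjoint, so q^m (q - 1) |U \<inter> P| < |U| = q^n, which forces
  dim(U \<inter> P) < n - m.\<close>

lemma subfield_closed:
  assumes "is_subfield K"
  shows "0 \<in> K" "1 \<in> K" "x \<in> K \<Longrightarrow> y \<in> K \<Longrightarrow> x + y \<in> K"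
    "x \<in> K \<Longrightarrow> y \<in> K \<Longrightarrow> x * y \<in> K" "x \<in> K \<Longrightarrow> - x \<in> K"
    "x \<in> K \<Longrightarrow> y \<in> K \<Longrightarrow> x - y \<in> K" "x \<in> K \<Longrightarrow> inverse x \<in> K"
proof -
  have closed: "0 \<in> K" "1 \<in> K" "\<And>x y. x \<in> K \<Longrightarrow> y \<in> K \<Longrightarrow> x + y \<in> K"
    "\<And>x y. x \<in> K \<Longrightarrow> y \<in> K \<Longrightarrow> x * y \<in> K" "\<And>x. x \<in> K \<Longrightarrow> - x \<in> K"
    "\<And>x. x \<in> K \<Longrightarrow> x \<noteq> 0 \<Longrightarrow> inverse x \<in> K"
    using assms by (simp_all add: is_subfield_def)
  show "0 \<in> K" "1 \<in> K" "x \<in> K \<Longrightarrow> y \<in> K \<Longrightarrow> x + y \<in> K"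
    "x \<in> K \<Longrightarrow> y \<in> K \<Longrightarrow> x * y \<in> K" "x \<in> K \<Longrightarrow> - x \<in> K"
    by (simp_all add: closed)
  show "x \<in> K \<Longrightarrow> y \<in> K \<Longrightarrow> x - y \<in> K"
    unfolding diff_conv_add_uminus by (intro closed(3,5))
  show "x \<in> K \<Longrightarrow> inverse x \<in> K"
    using closed(1,6) by (cases "x = 0") auto
qed

lemma is_subfield_UNIV: "is_subfield UNIV"
  by (simp add: is_subfield_def)

lemma two_le_card_subfield:
  fixes K :: "'a::{field,finite} set"
  assumes "is_subfield K"
  shows "2 \<le> card K"
proof -
  have "card {0::'a, 1} \<le> card K"
    using subfield_closed(1,2)[OF assms] by (intro card_mono) auto
  then show ?thesis by simp
qed

subsection \<open>Subspaces and spans over a subfield\<close>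

lemma lin_subspace_mono_scalars: "K \<subseteq> L \<Longrightarrow> lin_subspace L V \<Longrightarrow> lin_subspace K V"
  by (auto simp: lin_subspace_def)

lemma lin_subspace_Int: "lin_subspace K V \<Longrightarrow> lin_subspace K W \<Longrightarrow> lin_subspace K (V \<inter> W)"
  by (simp add: lin_subspace_def)

lemma lin_subspace_diff:
  fixes V :: "('a::field^'k) set"
  assumes "is_subfield K" "lin_subspace K V" "x \<in> V" "y \<in> V"
  shows "x - y \<in> V"
proof -
  have "x + (-1) *s y \<in> V"
    using assms subfield_closed(2,5)[OF assms(1)] unfolding lin_subspace_def by blast
  moreover have "x + (-1) *s y = x - y" by (simp add: vec_eq_iff)
  ultimately show ?thesis by simp
qed

lemma lin_subspace_sum:
  assumes "lin_subspace K V" "finite S" "S \<subseteq> V" "\<forall>x\<in>S. c x \<in> K"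
  shows "(\<Sum>x\<in>S. c x *s x) \<in> V"
  using assms(2-4)
  by (induction S rule: finite_induct) (use assms(1) in \<open>auto simp: lin_subspace_def\<close>)

lemma lin_span_minimal: "lin_subspace K V \<Longrightarrow> A \<subseteq> V \<Longrightarrow> lin_span K A \<subseteq> V"
  unfolding lin_span_def using lin_subspace_sum by blast

lemma lin_span_superset:
  assumes "is_subfield K"
  shows "A \<subseteq> lin_span K A"
proof
  fix x assume "x \<in> A"
  then show "x \<in> lin_span K A"
    unfolding lin_span_def using subfield_closed(2)[OF assms]
    by (intro CollectI exI[of _ "{x}"] exI[of _ "\<lambda>_. 1"]) simp
qed

lemma lin_subspace_lin_span:
  assumes K: "is_subfield K"
  shows "lin_subspace K (lin_span K A)"
  unfolding lin_subspace_def
proof (intro conjI ballI)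
  show "0 \<in> lin_span K A"
    unfolding lin_span_def by (intro CollectI exI[of _ "{}"]) auto
next
  fix x y assume "x \<in> lin_span K A" "y \<in> lin_span K A"
  then obtain S c T d
    where S: "finite S" "S \<subseteq> A" "\<forall>x\<in>S. c x \<in> K" "x = (\<Sum>x\<in>S. c x *s x)"
      and T: "finite T" "T \<subseteq> A" "\<forall>x\<in>T. d x \<in> K" "y = (\<Sum>x\<in>T. d x *s x)"
    unfolding lin_span_def by blast
  have extend: "(\<Sum>z\<in>S \<union> T. (if z \<in> R then f z else 0) *s z) = (\<Sum>z\<in>R. f z *s z)"
    if "R \<subseteq> S \<union> T" for R f
    using that S(1) T(1) by (intro sum.mono_neutral_cong_right) auto
  define e where "e z = (if z \<in> S then c z else 0) + (if z \<in> T then d z else 0)" for z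
  have "x + y = (\<Sum>z\<in>S \<union> T. e z *s z)"
    unfolding e_def vector_sadd_rdistrib sum.distrib using S(4) T(4) extend by simp
  moreover have "\<forall>z\<in>S \<union> T. e z \<in> K"
    using S(3) T(3) subfield_closed[OF K] unfolding e_def by auto
  ultimately show "x + y \<in> lin_span K A"
    unfolding lin_span_def using S T by (intro CollectI exI[of _ "S \<union> T"] exI[of _ e]) auto
next
  fix a x assume "a \<in> K" "x \<in> lin_span K A"
  then obtain S c where S: "finite S" "S \<subseteq> A" "\<forall>x\<in>S. c x \<in> K" "x = (\<Sum>x\<in>S. c x *s x)"
    unfolding lin_span_def by blast
  have "a *s x = (\<Sum>z\<in>S. (a * c z) *s z)"
    using S(4) by (simp add: vec_eq_iff sum_distrib_left mult.assoc)
  then show "a *s x \<in> lin_span K A"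
    unfolding lin_span_def using S \<open>a \<in> K\<close> subfield_closed(4)[OF K]
    by (intro CollectI exI[of _ S] exI[of _ "\<lambda>z. a * c z"]) auto
qed

subsection \<open>Bases and cardinality\<close>

lemma lin_indepD:
  assumes "lin_indep K B" "\<forall>x\<in>B. c x \<in> K" "(\<Sum>x\<in>B. c x *s x) = 0" "x \<in> B"
  shows "c x = 0"
  using assms unfolding lin_indep_def by blast

lemma lin_indep_insert:
  fixes B :: "('a::field^'k) set"
  assumes K: "is_subfield K" and B: "lin_indep K B" and v: "v \<notin> lin_span K B"
  shows "lin_indep K (insert v B)"
proof -
  have fin: "finite B" using B unfolding lin_indep_def by blast
  have vB: "v \<notin> B" using v lin_span_superset[OF K] by blast
  show ?thesis unfolding lin_indep_def
  proof (intro conjI allI impI)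
    show "finite (insert v B)" using fin by simp
    fix c assume c: "(\<forall>x\<in>insert v B. c x \<in> K) \<and> (\<Sum>x\<in>insert v B. c x *s x) = 0"
    then have eq: "c v *s v + (\<Sum>x\<in>B. c x *s x) = 0" using fin vB by simp
    have cv: "c v = 0"
    proof (rule ccontr)
      assume nz: "c v \<noteq> 0"
      have "v = inverse (c v) *s (c v *s v)" using nz by (simp add: vector_smult_assoc)
      also have "c v *s v = - (\<Sum>x\<in>B. c x *s x)" using eq by (simp add: eq_neg_iff_add_eq_0)
      also have "inverse (c v) *s - (\<Sum>x\<in>B. c x *s x) = (\<Sum>x\<in>B. (- inverse (c v) * c x) *s x)"
        by (simp add: vec_eq_iff sum_distrib_left sum_negf mult.assoc)
      finally have "v = (\<Sum>x\<in>B. (- inverse (c v) * c x) *s x)" .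
      moreover have "\<forall>x\<in>B. - inverse (c v) * c x \<in> K" using c subfield_closed[OF K] by auto
      ultimately have "v \<in> lin_span K B" unfolding lin_span_def using fin
        by (intro CollectI exI[of _ B] exI[of _ "\<lambda>x. - inverse (c v) * c x"]) auto
      then show False using v by simp
    qed
    then have "\<forall>x\<in>B. c x = 0" using lin_indepD[OF B] c eq by simp
    then show "\<forall>x\<in>insert v B. c x = 0" using cv by simp
  qed
qed

lemma lin_basis_exists:
  fixes V :: "('a::{field,finite}^'k) set"
  assumes K: "is_subfield K" and V: "lin_subspace K V"
  shows "\<exists>B. B \<subseteq> V \<and> lin_indep K B \<and> lin_span K B = V"
proof -
  define I where "I = {B. B \<subseteq> V \<and> lin_indep K B}"
  have "finite I" "{} \<in> I"
    unfolding I_def lin_indep_def by simp_all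
  then obtain B where "B \<in> I" and maximal: "\<And>B'. B' \<in> I \<Longrightarrow> B \<subseteq> B' \<Longrightarrow> B' = B"
    using finite_has_maximal[of I] by blast
  then have B: "B \<subseteq> V" "lin_indep K B" unfolding I_def by simp_all
  have "V \<subseteq> lin_span K B"
  proof
    fix v assume "v \<in> V"
    show "v \<in> lin_span K B"
    proof (rule ccontr)
      assume v: "v \<notin> lin_span K B"
      then have "insert v B \<in> I"
        unfolding I_def using lin_indep_insert[OF K B(2)] \<open>v \<in> V\<close> B(1) by simp
      then have "insert v B = B" using maximal by blast
      then show False using v lin_span_superset[OF K] by blast
    qed
  qed
  then show ?thesis using lin_span_minimal[OF V B(1)] B by blast
qed

lemma card_lin_span_indep:
  fixes B :: "('a::field^'k) set"
  assumes K: "is_subfield K" and B: "lin_indep K B"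
  shows "card (lin_span K B) = card K ^ card B"
proof -
  have fin: "finite B" using B unfolding lin_indep_def by blast
  define f where "f c = (\<Sum>x\<in>B. c x *s x)" for c
  have "inj_on f (PiE B (\<lambda>_. K))"
  proof (rule inj_onI)
    fix c d assume c: "c \<in> PiE B (\<lambda>_. K)" and d: "d \<in> PiE B (\<lambda>_. K)" and "f c = f d"
    then have "(\<Sum>x\<in>B. (c x - d x) *s x) = 0"
      unfolding f_def by (simp add: vector_sub_rdistrib sum_subtractf)
    moreover have "\<forall>x\<in>B. c x - d x \<in> K" using c d subfield_closed(6)[OF K] by auto
    ultimately have "\<forall>x\<in>B. c x - d x = 0" using lin_indepD[OF B, of "\<lambda>x. c x - d x"] by blast
    then show "c = d" using c d by (intro extensionalityI[of _ B]) (auto simp: PiE_iff)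
  qed
  moreover have "f ` PiE B (\<lambda>_. K) = lin_span K B"
  proof
    show "f ` PiE B (\<lambda>_. K) \<subseteq> lin_span K B"
      unfolding lin_span_def f_def using fin by (auto simp: PiE_iff)
    show "lin_span K B \<subseteq> f ` PiE B (\<lambda>_. K)"
    proof
      fix v assume "v \<in> lin_span K B"
      then obtain S d where S: "finite S" "S \<subseteq> B" "\<forall>x\<in>S. d x \<in> K" "v = (\<Sum>x\<in>S. d x *s x)"
        unfolding lin_span_def by blast
      define c where "c = restrict (\<lambda>x. if x \<in> S then d x else 0) B"
      have "c \<in> PiE B (\<lambda>_. K)" using S subfield_closed(1)[OF K] by (auto simp: c_def)
      moreover have "f c = v"
        unfolding f_def c_def S(4) using fin S(1,2) by (intro sum.mono_neutral_cong_right) auto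
      ultimately show "v \<in> f ` PiE B (\<lambda>_. K)" by blast
    qed
  qed
  ultimately have "card (lin_span K B) = card (PiE B (\<lambda>_. K))" by (metis card_image)
  also have "\<dots> = card K ^ card B" using fin by (simp add: card_PiE)
  finally show ?thesis .
qed

lemma card_lin_subspace:
  fixes V :: "('a::{field,finite}^'k) set"
  assumes K: "is_subfield K" and V: "lin_subspace K V"
  shows "card V = card K ^ lin_dim K V"
proof -
  have "\<exists>B. B \<subseteq> V \<and> lin_indep K B \<and> lin_span K B = V \<and> card B = lin_dim K V"
    unfolding lin_dim_def by (rule someI_ex) (use lin_basis_exists[OF K V] in blast)
  then show ?thesis using card_lin_span_indep[OF K] by force
qed

lemma card_lin_subspace_psubset:
  fixes V W :: "('a::{field,finite}^'k) set"
  assumes K: "is_subfield K" and V: "lin_subspace K V" and W: "lin_subspace K W" and "V \<subset> W"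
  shows "card K * card V \<le> card W"
proof -
  have K2: "2 \<le> card K" by (rule two_le_card_subfield[OF K])
  have "card K ^ lin_dim K V < card K ^ lin_dim K W"
    using psubset_card_mono[OF _ \<open>V \<subset> W\<close>] card_lin_subspace[OF K V] card_lin_subspace[OF K W]
    by simp
  then have "Suc (lin_dim K V) \<le> lin_dim K W" using K2 by simp
  then have "card K ^ Suc (lin_dim K V) \<le> card K ^ lin_dim K W"
    using K2 by (intro power_increasing) auto
  then show ?thesis using card_lin_subspace[OF K V] card_lin_subspace[OF K W] by simp
qed

lemma card_lin_subspace_UNIV:
  fixes H :: "('a::{field,finite}^'k) set"
  assumes "lin_subspace UNIV H"
  shows "card H = CARD('a) ^ lin_dim UNIV H"
  using card_lin_subspace[OF is_subfield_UNIV assms] by simp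

lemma lin_dim_UNIV_eq_iff_card:
  fixes H :: "('a::{field,finite}^'k) set"
  assumes "lin_subspace UNIV H"
  shows "lin_dim UNIV H = j \<longleftrightarrow> card H = CARD('a) ^ j"
  using card_lin_subspace_UNIV[OF assms] two_le_card_subfield[OF is_subfield_UNIV, where 'a='a]
  by simp

lemma lin_subspace_neq_UNIV:
  fixes H :: "('a::{field,finite}^'k) set"
  assumes "lin_subspace UNIV H" and "lin_dim UNIV H < CARD('k)"
  shows "H \<noteq> UNIV"
proof
  assume "H = UNIV"
  then have "CARD('a) ^ lin_dim UNIV H = CARD('a) ^ CARD('k)"
    using card_lin_subspace_UNIV[OF assms(1)] by simp
  then show False using assms(2) two_le_card_subfield[OF is_subfield_UNIV, where 'a='a] by simp
qed

subsection \<open>Adjoining a vector\<close>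

definition adjoin :: "('a::field^'k) set \<Rightarrow> 'a^'k \<Rightarrow> ('a^'k) set" where
  "adjoin S w = {s + a *s w | s a. s \<in> S}"

lemma lin_subspace_adjoin:
  assumes S: "lin_subspace UNIV S"
  shows "lin_subspace UNIV (adjoin S w)"
  unfolding lin_subspace_def
proof (intro conjI ballI)
  show "0 \<in> adjoin S w"
    unfolding adjoin_def using S
    by (intro CollectI exI[of _ 0] exI[of _ "0::'a"]) (auto simp: lin_subspace_def)
next
  fix x y assume "x \<in> adjoin S w" "y \<in> adjoin S w"
  then obtain s a s' b where "s \<in> S" "x = s + a *s w" "s' \<in> S" "y = s' + b *s w"
    unfolding adjoin_def by blast
  moreover have "x + y = (s + s') + (a + b) *s w"
    using calculation by (simp add: vec_eq_iff algebra_simps)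
  ultimately show "x + y \<in> adjoin S w" using S unfolding adjoin_def lin_subspace_def by blast
next
  fix c x assume "x \<in> adjoin S w"
  then obtain s a where "s \<in> S" "x = s + a *s w" unfolding adjoin_def by blast
  moreover have "c *s x = c *s s + (c * a) *s w"
    using calculation by (simp add: vec_eq_iff algebra_simps)
  ultimately show "c *s x \<in> adjoin S w" using S unfolding adjoin_def lin_subspace_def by blast
qed

lemma adjoin_superset: "S \<subseteq> adjoin S w"
  unfolding adjoin_def by force

lemma adjoin_minimal: "lin_subspace UNIV H \<Longrightarrow> S \<subseteq> H \<Longrightarrow> w \<in> H \<Longrightarrow> adjoin S w \<subseteq> H"
  unfolding adjoin_def lin_subspace_def by blast

lemma card_adjoin:
  fixes S :: "('a::{field,finite}^'k) set"
  assumes S: "lin_subspace UNIV S" and w: "w \<notin> S"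
  shows "card (adjoin S w) = CARD('a) * card S"
proof -
  define g where "g = (\<lambda>(s, a). s + a *s w)"
  have "inj_on g (S \<times> UNIV)"
  proof (rule inj_onI, clarsimp simp: g_def)
    fix s a s' b assume s: "s \<in> S" "s' \<in> S" and eq: "s + a *s w = s' + b *s w"
    have "a = b"
    proof (rule ccontr)
      assume "a \<noteq> b"
      have "w = inverse (a - b) *s ((a - b) *s w)"
        using \<open>a \<noteq> b\<close> by (simp only: vector_smult_assoc) simp
      also have "(a - b) *s w = s' - s"
        using eq by (simp add: vec_eq_iff algebra_simps)
      finally have "w = inverse (a - b) *s (s' - s)" .
      moreover have "s' - s \<in> S" using lin_subspace_diff[OF is_subfield_UNIV S] s by blast
      ultimately have "w \<in> S" using S unfolding lin_subspace_def by blast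
      then show False using w by simp
    qed
    then show "s = s' \<and> a = b" using eq by simp
  qed
  moreover have "adjoin S w = g ` (S \<times> UNIV)" unfolding adjoin_def g_def by auto
  ultimately show ?thesis by (simp add: card_image card_cartesian_product)
qed

lemma lin_dim_adjoin:
  fixes S :: "('a::{field,finite}^'k) set"
  assumes S: "lin_subspace UNIV S" and w: "w \<notin> S"
  shows "lin_dim UNIV (adjoin S w) = Suc (lin_dim UNIV S)"
  using card_adjoin[OF S w] card_lin_subspace_UNIV[OF S]
  by (simp add: lin_dim_UNIV_eq_iff_card[OF lin_subspace_adjoin[OF S]])

lemma intermediate_subspace_exists:
  fixes S H :: "('a::{field,finite}^'k) set"
  assumes S: "lin_subspace UNIV S" and H: "lin_subspace UNIV H" and "S \<subseteq> H"
    and "lin_dim UNIV S \<le> j" and "j \<le> lin_dim UNIV H"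
  shows "\<exists>P. lin_subspace UNIV P \<and> S \<subseteq> P \<and> P \<subseteq> H \<and> lin_dim UNIV P = j"
  using assms(4,5)
proof (induction j rule: dec_induct)
  case base
  then show ?case using S \<open>S \<subseteq> H\<close> by blast
next
  case (step j)
  then obtain P where P: "lin_subspace UNIV P" "S \<subseteq> P" "P \<subseteq> H" "lin_dim UNIV P = j"
    by auto
  then have "P \<noteq> H" using step.prems by auto
  then obtain v where "v \<in> H" "v \<notin> P" using P(3) by blast
  then show ?case
    using lin_subspace_adjoin[OF P(1)] adjoin_superset[of P v] adjoin_minimal[OF H P(3)]
      lin_dim_adjoin[OF P(1)] P(2,4) by (metis order_trans)
qed

subsection \<open>Hyperplanes\<close>

text \<open>Each u \<in> U is sent to its coordinate a along w together with its difference to a fixed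
  representative in U of the coset a w + H; this pair determines u.\<close>

lemma card_le_card_Int_adjoin:
  fixes U H :: "('a::{field,finite}^'k) set"
  assumes F: "is_subfield F" and U: "lin_subspace F U" and H: "lin_subspace UNIV H"
    and cover: "adjoin H w = UNIV"
  shows "card U \<le> CARD('a) * card (U \<inter> H)"
proof -
  define coord where "coord u = (SOME a. u - a *s w \<in> H)" for u
  have coord: "u - coord u *s w \<in> H" for u
  proof -
    obtain h a where "h \<in> H" "u = h + a *s w" using cover unfolding adjoin_def by blast
    then have "u - a *s w \<in> H" by simp
    then show ?thesis unfolding coord_def by (rule someI)
  qed
  define rep where "rep a = (SOME u. u \<in> U \<and> coord u = a)" for a
  have rep: "rep (coord u) \<in> U \<and> coord (rep (coord u)) = coord u" if "u \<in> U" for u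
    unfolding rep_def by (rule someI[of _ u]) (simp add: that)
  define g where "g u = (coord u, u - rep (coord u))" for u
  have "inj_on g U" by (rule inj_onI) (auto simp: g_def)
  moreover have "g ` U \<subseteq> UNIV \<times> (U \<inter> H)"
  proof (clarsimp simp: g_def)
    fix u assume u: "u \<in> U"
    have "u - rep (coord u) \<in> U" using lin_subspace_diff[OF F U u] rep[OF u] by blast
    moreover have "u - rep (coord u)
        = (u - coord u *s w) - (rep (coord u) - coord (rep (coord u)) *s w)"
      using rep[OF u] by simp
    then have "u - rep (coord u) \<in> H"
      by (simp only:) (rule lin_subspace_diff[OF is_subfield_UNIV H coord coord])
    ultimately show "u - rep (coord u) \<in> U \<and> u - rep (coord u) \<in> H" by blast
  qed
  ultimately have "card U \<le> card ((UNIV :: 'a set) \<times> (U \<inter> H))" by (rule card_inj_on_le) simp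
  then show ?thesis by (simp add: card_cartesian_product)
qed

lemma card_le_card_Int_hyperplane:
  fixes U H :: "('a::{field,finite}^'k) set"
  assumes F: "is_subfield F" and U: "lin_subspace F U"
    and H: "lin_subspace UNIV H" and dH: "lin_dim UNIV H + 1 = CARD('k)"
  shows "card U \<le> CARD('a) * card (U \<inter> H)"
proof -
  obtain w where w: "w \<notin> H" using lin_subspace_neq_UNIV[OF H] dH by auto
  have "card (adjoin H w) = card (UNIV :: ('a^'k) set)"
    using card_adjoin[OF H w] card_lin_subspace_UNIV[OF H] by (simp flip: dH)
  then have "adjoin H w = UNIV" by (intro card_subset_eq) simp_all
  then show ?thesis by (rule card_le_card_Int_adjoin[OF F U H])
qed

lemma smult_add_smult_mem_imp_zero:
  fixes P :: "('a::field^'k) set"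
  assumes P: "lin_subspace UNIV P" and w1: "w1 \<notin> P" and w2: "w2 \<notin> adjoin P w1"
    and mem: "a *s w1 + b *s w2 \<in> P"
  shows "a = 0 \<and> b = 0"
proof -
  have "b = 0"
  proof (rule ccontr)
    assume "b \<noteq> 0"
    then have "w2 = inverse b *s (a *s w1 + b *s w2) + (- (a * inverse b)) *s w1"
      by (simp add: vec_eq_iff field_simps)
    moreover have "inverse b *s (a *s w1 + b *s w2) \<in> P"
      using P mem unfolding lin_subspace_def by blast
    ultimately show False using w2 unfolding adjoin_def by blast
  qed
  moreover have "a = 0"
  proof (rule ccontr)
    assume "a \<noteq> 0"
    have "a *s w1 \<in> P" using mem \<open>b = 0\<close> by simp
    then have "inverse a *s (a *s w1) \<in> P" using P unfolding lin_subspace_def by blast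
    then show False using w1 \<open>a \<noteq> 0\<close> by (simp add: vector_smult_assoc)
  qed
  ultimately show ?thesis by simp
qed

lemma adjoin_pencil_Int_subset:
  fixes P :: "('a::field^'k) set"
  assumes P: "lin_subspace UNIV P" and w1: "w1 \<notin> P" and w2: "w2 \<notin> adjoin P w1"
    and "s \<noteq> t"
  shows "adjoin P (w1 + s *s w2) \<inter> adjoin P (w1 + t *s w2) \<subseteq> P"
proof
  fix x assume "x \<in> adjoin P (w1 + s *s w2) \<inter> adjoin P (w1 + t *s w2)"
  then obtain p a p' b where p: "p \<in> P" "x = p + a *s (w1 + s *s w2)"
    and p': "p' \<in> P" "x = p' + b *s (w1 + t *s w2)"
    unfolding adjoin_def by blast
  have "(a - b) *s w1 + (a * s - b * t) *s w2 = p' - p"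
    using p(2) p'(2) by (simp add: vec_eq_iff algebra_simps)
  then have "(a - b) *s w1 + (a * s - b * t) *s w2 \<in> P"
    using lin_subspace_diff[OF is_subfield_UNIV P p'(1) p(1)] by simp
  from smult_add_smult_mem_imp_zero[OF P w1 w2 this] have "a = b \<and> a * s = b * t"
    by (metis right_minus_eq)
  then have "a = 0" using \<open>s \<noteq> t\<close> by auto
  then show "x \<in> P" using p by simp
qed

text \<open>The pencil consists of the hyperplanes through P and w1 + t w2, for t in the big field.\<close>

lemma hyperplane_pencil_exists:
  fixes P :: "('a::{field,finite}^'k) set"
  assumes P: "lin_subspace UNIV P" and dP: "lin_dim UNIV P + 2 = CARD('k)"
  obtains Hs :: "'a \<Rightarrow> ('a^'k) set"
  where "\<And>t. lin_subspace UNIV (Hs t)" "\<And>t. lin_dim UNIV (Hs t) + 1 = CARD('k)"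
    "\<And>t. P \<subset> Hs t" "\<And>s t. s \<noteq> t \<Longrightarrow> Hs s \<inter> Hs t \<subseteq> P"
proof -
  obtain w1 where w1: "w1 \<notin> P" using lin_subspace_neq_UNIV[OF P] dP by auto
  have "lin_dim UNIV (adjoin P w1) < CARD('k)" using lin_dim_adjoin[OF P w1] dP by simp
  then obtain w2 where w2: "w2 \<notin> adjoin P w1"
    using lin_subspace_neq_UNIV[OF lin_subspace_adjoin[OF P]] by auto
  have notin: "w1 + t *s w2 \<notin> P" for t
    using smult_add_smult_mem_imp_zero[OF P w1 w2, of 1 t] by auto
  show thesis
  proof (rule that[of "\<lambda>t. adjoin P (w1 + t *s w2)"])
    show "lin_subspace UNIV (adjoin P (w1 + t *s w2))" for t
      by (rule lin_subspace_adjoin[OF P])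
    show "lin_dim UNIV (adjoin P (w1 + t *s w2)) + 1 = CARD('k)" for t
      using lin_dim_adjoin[OF P notin] dP by simp
    show "P \<subset> adjoin P (w1 + t *s w2)" for t
      using adjoin_superset lin_dim_adjoin[OF P notin] by (metis n_not_Suc_n psubsetI)
    show "adjoin P (w1 + s *s w2) \<inter> adjoin P (w1 + t *s w2) \<subseteq> P" if "s \<noteq> t" for s t
      by (rule adjoin_pencil_Int_subset[OF P w1 w2 that])
  qed
qed

lemma hyperplane_section_in_codim2_subspace:
  fixes U H :: "('a::{field,finite}^'k) set"
  assumes H: "lin_subspace UNIV H" and dH: "lin_dim UNIV H + 1 = CARD('k)"
    and not_spanned: "lin_span UNIV (H \<inter> U) \<noteq> H"
  obtains P
  where "lin_subspace UNIV P" "lin_dim UNIV P + 2 = CARD('k)" "H \<inter> U \<subseteq> P" "P \<subseteq> H"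
proof -
  define S where "S = lin_span UNIV (H \<inter> U)"
  have S: "lin_subspace UNIV S"
    unfolding S_def by (rule lin_subspace_lin_span[OF is_subfield_UNIV])
  have "H \<inter> U \<subseteq> S"
    unfolding S_def by (rule lin_span_superset[OF is_subfield_UNIV])
  have "S \<subseteq> H"
    unfolding S_def by (rule lin_span_minimal[OF H]) blast
  then have "card S < card H"
    using not_spanned unfolding S_def by (intro psubset_card_mono) auto
  then have dS: "lin_dim UNIV S + 2 \<le> CARD('k)"
    using card_lin_subspace_UNIV[OF S] card_lin_subspace_UNIV[OF H] dH
      two_le_card_subfield[OF is_subfield_UNIV, where 'a='a] by simp
  then have "lin_dim UNIV S \<le> CARD('k) - 2" by simp
  moreover have "CARD('k) - 2 \<le> lin_dim UNIV H" using dH by simp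
  ultimately obtain P
    where P: "lin_subspace UNIV P" "S \<subseteq> P" "P \<subseteq> H" "lin_dim UNIV P = CARD('k) - 2"
    using intermediate_subspace_exists[OF S H \<open>S \<subseteq> H\<close>] by blast
  show thesis
  proof (rule that[OF P(1)])
    show "lin_dim UNIV P + 2 = CARD('k)" using P(4) dS by simp
    show "H \<inter> U \<subseteq> P" "P \<subseteq> H" using P(2,3) \<open>H \<inter> U \<subseteq> S\<close> by blast+
  qed
qed

lemma cutting_section_psubset:
  fixes U P H :: "('a::{field,finite}^'k) set"
  assumes "cutting U" and P: "lin_subspace UNIV P"
    and H: "lin_subspace UNIV H" and dH: "lin_dim UNIV H + 1 = CARD('k)" and "P \<subset> H"
  shows "U \<inter> P \<subset> U \<inter> H"
proof -
  have "lin_span UNIV (H \<inter> U) = H"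
    using \<open>cutting U\<close> H dH unfolding cutting_def by auto
  moreover have "lin_span UNIV (H \<inter> U) \<subseteq> P" if "U \<inter> H \<subseteq> P"
    using lin_span_minimal[OF P] that by blast
  ultimately show ?thesis using \<open>P \<subset> H\<close> by blast
qed

lemma card_pencil_sections:
  fixes U P :: "'b set" and Hs :: "'c::finite \<Rightarrow> 'b set"
  assumes U: "finite U" and "\<And>t. P \<subseteq> Hs t"
    and disjoint: "\<And>s t. s \<noteq> t \<Longrightarrow> Hs s \<inter> Hs t \<subseteq> P"
    and big: "\<And>t. r * card (U \<inter> P) \<le> card (U \<inter> Hs t)"
  shows "CARD('c) * (r - 1) * card (U \<inter> P) + card (U \<inter> P) \<le> card U"
proof -
  define D where "D t = U \<inter> Hs t - P" for t
  have "card (D t) = card (U \<inter> Hs t) - card (U \<inter> P)" for t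
  proof -
    have "U \<inter> Hs t \<inter> P = U \<inter> P" using \<open>P \<subseteq> Hs t\<close> by blast
    then show ?thesis unfolding D_def using U by (simp add: card_Diff_subset_Int)
  qed
  then have "(r - 1) * card (U \<inter> P) \<le> card (D t)" for t
    using big[of t] by (simp add: diff_mult_distrib)
  then have "CARD('c) * ((r - 1) * card (U \<inter> P)) \<le> (\<Sum>t\<in>UNIV. card (D t))"
    using sum_bounded_below[of UNIV "(r - 1) * card (U \<inter> P)" "\<lambda>t. card (D t)"] by simp
  also have "\<dots> = card (\<Union>t. D t)"
    using U disjoint unfolding D_def by (intro card_UN_disjoint[symmetric]) auto
  also have "\<dots> \<le> card (U - P)"
    using U unfolding D_def by (intro card_mono) auto
  also have "\<dots> = card U - card (U \<inter> P)"
    using U by (simp add: card_Diff_subset_Int)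
  finally show ?thesis
    using card_mono[OF U, of "U \<inter> P"] by (simp add: mult.assoc)
qed

lemma evasive_imp_cutting:
  fixes F :: "'a::{field,finite} set" and U :: "('a^'k) set"
  assumes F: "is_subfield F" and U: "lin_subspace F U" and Q: "CARD('a) = card F ^ m"
    and ev: "evasive F (int CARD('k) - 2) (int (lin_dim F U) - int m - 1) U"
  shows "cutting U"
  unfolding cutting_def
proof (intro allI impI)
  fix H :: "('a^'k) set"
  assume "lin_subspace UNIV H \<and> int (lin_dim UNIV H) = int CARD('k) - 1"
  then have H: "lin_subspace UNIV H" and dH: "lin_dim UNIV H + 1 = CARD('k)" by auto
  show "lin_span UNIV (H \<inter> U) = H"
  proof (rule ccontr)
    assume "lin_span UNIV (H \<inter> U) \<noteq> H"
    then obtain P where P: "lin_subspace UNIV P" "lin_dim UNIV P + 2 = CARD('k)"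
      and "H \<inter> U \<subseteq> P" "P \<subseteq> H"
      by (rule hyperplane_section_in_codim2_subspace[OF H dH])
    then have "U \<inter> P = U \<inter> H" by blast
    moreover have "int (lin_dim F (U \<inter> P)) \<le> int (lin_dim F U) - int m - 1"
      using ev P unfolding evasive_def by auto
    ultimately have small: "m + lin_dim F (U \<inter> H) < lin_dim F U" by simp
    have "card F ^ lin_dim F U \<le> card F ^ m * card F ^ lin_dim F (U \<inter> H)"
      using card_le_card_Int_hyperplane[OF F U H dH] Q card_lin_subspace[OF F U]
        card_lin_subspace[OF F lin_subspace_Int[OF U lin_subspace_mono_scalars[OF subset_UNIV H]]]
      by simp
    then have "lin_dim F U \<le> m + lin_dim F (U \<inter> H)"
      using two_le_card_subfield[OF F] by (simp add: power_add[symmetric])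
    then show False using small by simp
  qed
qed

lemma cutting_imp_evasive:
  fixes F :: "'a::{field,finite} set" and U :: "('a^'k) set"
  assumes F: "is_subfield F" and U: "lin_subspace F U" and Q: "CARD('a) = card F ^ m"
    and cut: "cutting U"
  shows "evasive F (int CARD('k) - 2) (int (lin_dim F U) - int m - 1) U"
  unfolding evasive_def
proof (intro allI impI)
  fix P :: "('a^'k) set"
  assume "lin_subspace UNIV P \<and> int (lin_dim UNIV P) = int CARD('k) - 2"
  then have P: "lin_subspace UNIV P" and dP: "lin_dim UNIV P + 2 = CARD('k)" by auto
  obtain Hs :: "'a \<Rightarrow> ('a^'k) set"
    where Hs: "\<And>t. lin_subspace UNIV (Hs t)" "\<And>t. lin_dim UNIV (Hs t) + 1 = CARD('k)"
      "\<And>t. P \<subset> Hs t" and disjoint: "\<And>s t. s \<noteq> t \<Longrightarrow> Hs s \<inter> Hs t \<subseteq> P"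
    using hyperplane_pencil_exists[OF P dP] by blast
  have U_Int: "lin_subspace F (U \<inter> X)" if "lin_subspace UNIV X" for X
    by (rule lin_subspace_Int[OF U lin_subspace_mono_scalars[OF subset_UNIV that]])
  have big: "card F * card (U \<inter> P) \<le> card (U \<inter> Hs t)" for t
    by (rule card_lin_subspace_psubset[OF F U_Int[OF P] U_Int[OF Hs(1)]
          cutting_section_psubset[OF cut P Hs(1,2,3)]])
  have count: "CARD('a) * (card F - 1) * card (U \<inter> P) + card (U \<inter> P) \<le> card U"
    by (rule card_pencil_sections[OF finite _ disjoint big]) (use Hs(3) in blast)
  have q: "2 \<le> card F" by (rule two_le_card_subfield[OF F])
  show "int (lin_dim F (U \<inter> P)) \<le> int (lin_dim F U) - int m - 1"
  proof (rule ccontr)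
    assume "\<not> ?thesis"
    then have "lin_dim F U \<le> m + lin_dim F (U \<inter> P)" by simp
    then have "card U \<le> CARD('a) * card (U \<inter> P)"
      using card_lin_subspace[OF F U] card_lin_subspace[OF F U_Int[OF P]] Q q
      by (simp add: power_add[symmetric] power_increasing)
    moreover have "CARD('a) * 1 * card (U \<inter> P) \<le> CARD('a) * (card F - 1) * card (U \<inter> P)"
      using q by (intro mult_le_mono1 mult_le_mono2) simp
    moreover have "0 < card (U \<inter> P)"
      using card_lin_subspace[OF F U_Int[OF P]] q by simp
    ultimately show False using count by simp
  qed
qed

theorem theorem3p3:
  fixes F :: "'a::{field,finite} set" and U :: "('a^'k) set"
    and q m n :: nat
  assumes "\<exists>p e. prime p \<and> e > 0 \<and> q = p ^ e"
    and "m > 0" and "n > 0"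
    and "is_subfield F" and "card F = q" and "CARD('a) = q ^ m"
    and "is_system F n U"
  shows "evasive F (int CARD('k) - 2) (int n - int m - 1) U \<longleftrightarrow> cutting U"
proof -
  have U: "lin_subspace F U" and "lin_dim F U = n"
    using assms(7) unfolding is_system_def by auto
  moreover have "CARD('a) = card F ^ m" using assms(5,6) by simp
  ultimately show ?thesis
    using evasive_imp_cutting[OF assms(4) U] cutting_imp_evasive[OF assms(4) U] by blast
qed

end
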